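(* Let $G$ be a graph and write $E_{v,i}=e_{v,i}+\mathcal I(G,K_3)\in\mathcal A(G,K_3)$. If $(v,w)\in E(G)$ then $E_{v,i}E_{w,j}=E_{w,j}E_{v,i}$ for all $i,j$. In particular, if $G$ is complete then $\mathcal A(G,K_3)$ is abelian.
   Context: Graphs are finite, loopless, with symmetric edge sets; $K_3$ is the complete graph on $3$ vertices $\{0,1,2\}$. With $n=|V(G)|$, $\mathbb F(n,3)$ is the free product of $n$ copies of the cyclic group of order $3$ with generators $u_v$, $\mathbb C[\mathbb F(n,3)]$ its group $*$-algebra, $\omega=e^{2\pi i/3}$, $e_{v,a}=\frac13\sum_{k=0}^{2}(\omega^{-a}u_v)^k$. $\mathcal I(G,K_3)$ is the two-sided $*$-ideal generated by $e_{v,a}e_{v,b}$ ($a\ne b$) and $e_{v,a}e_{w,a}$ ($(v,w)\in E(G)$), and $\mathcal A(G,K_3)=\mathbb C[\mathbb F(n,3)]/\mathcal I(G,K_3)$. *)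

theory Defs
  imports Complex_Main
begin

text \<open>Elements of the free product F(n,3) of n copies of Z/3 are represented by
reduced words: lists of letters (v,k), meaning u_v^k, with v < n, k in {1,2},
and no two adjacent letters with the same v.\<close>

type_synonym word = "(nat \<times> nat) list"

definition letter_ok :: "nat \<Rightarrow> nat \<times> nat \<Rightarrow> bool" where
  "letter_ok n x \<longleftrightarrow> fst x < n \<and> (snd x = 1 \<or> snd x = 2)"

fun reduced :: "nat \<Rightarrow> word \<Rightarrow> bool" where
  "reduced n [] = True"
| "reduced n [x] = letter_ok n x"
| "reduced n (x # y # r) = (letter_ok n x \<and> fst x \<noteq> fst y \<and> reduced n (y # r))"

definition Fgrp :: "nat \<Rightarrow> word set" where
  "Fgrp n = {w. reduced n w}"

fun cons_letter :: "nat \<times> nat \<Rightarrow> word \<Rightarrow> word" where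
  "cons_letter (v, k) [] = [(v, k)]"
| "cons_letter (v, k) ((v', k') # r) =
     (if v' = v then (if (k + k') mod 3 = 0 then r else (v, (k + k') mod 3) # r)
      else (v, k) # (v', k') # r)"

definition wmult :: "word \<Rightarrow> word \<Rightarrow> word" where
  "wmult a b = foldr cons_letter a b"

definition winv :: "word \<Rightarrow> word" where
  "winv w = rev (map (\<lambda>(v, k). (v, 3 - k)) w)"

definition supp :: "(word \<Rightarrow> complex) \<Rightarrow> word set" where
  "supp f = {w. f w \<noteq> 0}"

definition GA :: "nat \<Rightarrow> (word \<Rightarrow> complex) set" where
  "GA n = {f. finite (supp f) \<and> supp f \<subseteq> Fgrp n}"

definition conv :: "(word \<Rightarrow> complex) \<Rightarrow> (word \<Rightarrow> complex) \<Rightarrow> (word \<Rightarrow> complex)" where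
  "conv f g = (\<lambda>w. \<Sum>a\<in>supp f. \<Sum>b\<in>supp g. if wmult a b = w then f a * g b else 0)"

definition gadd :: "(word \<Rightarrow> complex) \<Rightarrow> (word \<Rightarrow> complex) \<Rightarrow> (word \<Rightarrow> complex)" where
  "gadd f g = (\<lambda>w. f w + g w)"

definition gsub :: "(word \<Rightarrow> complex) \<Rightarrow> (word \<Rightarrow> complex) \<Rightarrow> (word \<Rightarrow> complex)" where
  "gsub f g = (\<lambda>w. f w - g w)"

definition gscale :: "complex \<Rightarrow> (word \<Rightarrow> complex) \<Rightarrow> (word \<Rightarrow> complex)" where
  "gscale c f = (\<lambda>w. c * f w)"

definition gstar :: "(word \<Rightarrow> complex) \<Rightarrow> (word \<Rightarrow> complex)" where
  "gstar f = (\<lambda>w. cnj (f (winv w)))"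

definition delta :: "word \<Rightarrow> (word \<Rightarrow> complex)" where
  "delta g = (\<lambda>w. if w = g then 1 else 0)"

definition ugen :: "nat \<Rightarrow> (word \<Rightarrow> complex)" where
  "ugen v = delta [(v, 1)]"

fun upow :: "nat \<Rightarrow> nat \<Rightarrow> (word \<Rightarrow> complex)" where
  "upow v 0 = delta []"
| "upow v (Suc k) = conv (ugen v) (upow v k)"

definition omega :: complex where
  "omega = exp (2 * of_real pi * \<i> / 3)"

definition eproj :: "nat \<Rightarrow> nat \<Rightarrow> (word \<Rightarrow> complex)" where
  "eproj v a = (\<lambda>w. (1/3) * (\<Sum>k<3. (inverse omega) ^ (a * k) * upow v k w))"

text \<open>The two-sided *-ideal I(G,K_3) of C[F(n,3)], generated by the given elements;
the graph G has vertex set {0..<n} and edge relation E.\<close>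
inductive_set Ideal :: "nat \<Rightarrow> (nat \<Rightarrow> nat \<Rightarrow> bool) \<Rightarrow> (word \<Rightarrow> complex) set"
  for n :: nat and E :: "nat \<Rightarrow> nat \<Rightarrow> bool" where
  gen1: "\<lbrakk>v < n; a < 3; b < 3; a \<noteq> b\<rbrakk> \<Longrightarrow> conv (eproj v a) (eproj v b) \<in> Ideal n E"
| gen2: "\<lbrakk>v < n; w < n; E v w; a < 3\<rbrakk> \<Longrightarrow> conv (eproj v a) (eproj w a) \<in> Ideal n E"
| zero: "(\<lambda>_. 0) \<in> Ideal n E"
| add: "\<lbrakk>x \<in> Ideal n E; y \<in> Ideal n E\<rbrakk> \<Longrightarrow> gadd x y \<in> Ideal n E"
| lmult: "\<lbrakk>x \<in> Ideal n E; c \<in> GA n\<rbrakk> \<Longrightarrow> conv c x \<in> Ideal n E"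
| rmult: "\<lbrakk>x \<in> Ideal n E; c \<in> GA n\<rbrakk> \<Longrightarrow> conv x c \<in> Ideal n E"
| star: "x \<in> Ideal n E \<Longrightarrow> gstar x \<in> Ideal n E"

definition graph_on :: "nat \<Rightarrow> (nat \<Rightarrow> nat \<Rightarrow> bool) \<Rightarrow> bool" where
  "graph_on n E \<longleftrightarrow> (\<forall>v w. E v w \<longrightarrow> v < n \<and> w < n \<and> v \<noteq> w \<and> E w v)"

definition complete_on :: "nat \<Rightarrow> (nat \<Rightarrow> nat \<Rightarrow> bool) \<Rightarrow> bool" where
  "complete_on n E \<longleftrightarrow> (\<forall>v w. v < n \<and> w < n \<and> v \<noteq> w \<longrightarrow> E v w)"

end

theory Submission
  imports Defs "HOL-Library.Function_Algebras"
begin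

text \<open>Let (v, w) be an edge and i \<noteq> l. Inserting 1 = sum_b e_{w,b} into e_{v,i} e_{v,l} \<in> I
shows that, for j \<notin> {i, l}, e_{v,i} e_{w,j} e_{v,l} is congruent modulo I to minus the terms with b = i and
b = l, which lie in I because they contain e_{v,i} e_{w,i} resp. e_{w,l} e_{v,l}; hence
e_{v,i} e_{w,j} e_{v,l} \<in> I. Multiplying e_{v,i} e_{w,j} on the right and e_{w,j} e_{v,i} on
the left by 1 = sum_l e_{v,l} then shows that both are congruent to e_{v,i} e_{w,j} e_{v,i}.

Since u_v = sum_a omega^a e_{v,a}, in a complete graph all generators commute modulo I; by the
Leibniz rule for commutators so do all group elements, and by bilinearity all elements of
the group algebra.\<close>

section \<open>Reduced words\<close>

lemma reduced_Cons:
  "reduced n (x # r) \<longleftrightarrow> letter_ok n x \<and> reduced n r \<and> (r \<noteq> [] \<longrightarrow> fst x \<noteq> fst (hd r))"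
  by (cases r) auto

lemma cons_letter_fresh: "r = [] \<or> fst (hd r) \<noteq> fst x \<Longrightarrow> cons_letter x r = x # r"
  by (cases x; cases r) auto

lemma reduced_cons_letter: "letter_ok n x \<Longrightarrow> reduced n z \<Longrightarrow> reduced n (cons_letter x z)"
proof (induction x z rule: cons_letter.induct)
  case (2 v k v' k' r)
  then show ?case by (cases r) (auto simp: letter_ok_def)
qed simp

lemma wmult_Nil [simp]: "wmult [] b = b"
  by (simp add: wmult_def)

lemma wmult_Cons [simp]: "wmult (x # a) b = cons_letter x (wmult a b)"
  by (simp add: wmult_def)

lemma reduced_wmult: "reduced n a \<Longrightarrow> reduced n b \<Longrightarrow> reduced n (wmult a b)"
  by (induction a) (auto simp: reduced_Cons intro: reduced_cons_letter)

lemma wmult_Nil_right: "reduced n a \<Longrightarrow> wmult a [] = a"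
  by (induction a) (auto simp: reduced_Cons intro!: cons_letter_fresh)

lemma cons_letter_cons_letter_same:
  assumes "k = 1 \<or> k = 2" "k' = 1 \<or> k' = 2" "reduced n z"
  shows "cons_letter (v, k) (cons_letter (v, k') z) =
           (if (k + k') mod 3 = 0 then z else cons_letter (v, (k + k') mod 3) z)"
proof (cases z)
  case (Cons y r)
  obtain v' m where y: "y = (v', m)" by (cases y)
  have fresh: "r \<noteq> [] \<Longrightarrow> fst (hd r) \<noteq> v'" and m: "m = 1 \<or> m = 2"
    using assms Cons y by (auto simp: reduced_Cons letter_ok_def)
  show ?thesis
  proof (cases "v' = v")
    case True
    have "cons_letter (v, j) r = (v, j) # r" for j using fresh True by (intro cons_letter_fresh) auto
    then show ?thesis using assms(1,2) m Cons y True by (elim disjE) (simp_all add: mod_Suc)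
  qed (use Cons y in auto)
qed (use assms in auto)

lemma wmult_cons_letter:
  assumes "letter_ok n x" "reduced n d" "reduced n c"
  shows "wmult (cons_letter x d) c = cons_letter x (wmult d c)"
proof -
  obtain v k where x: "x = (v, k)" and k: "k = 1 \<or> k = 2"
    using assms(1) by (cases x) (auto simp: letter_ok_def)
  show ?thesis
  proof (cases d)
    case (Cons y r)
    obtain v' k' where y: "y = (v', k')" by (cases y)
    have k': "k' = 1 \<or> k' = 2" and r: "reduced n r"
      using assms Cons y by (auto simp: reduced_Cons letter_ok_def)
    have "reduced n (wmult r c)" using r assms(3) by (rule reduced_wmult)
    from cons_letter_cons_letter_same[OF k k' this] show ?thesis
      using Cons x y by auto
  qed (use x in auto)
qed

lemma wmult_assoc:
  "reduced n a \<Longrightarrow> reduced n b \<Longrightarrow> reduced n c \<Longrightarrow> wmult (wmult a b) c = wmult a (wmult b c)"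
  by (induction a) (auto simp: reduced_Cons wmult_cons_letter reduced_wmult)

section \<open>The group algebra\<close>

lemma supp_delta [simp]: "supp (delta a) = {a}"
  by (auto simp: supp_def delta_def)

lemma supp_zero [simp]: "supp 0 = {}"
  by (auto simp: supp_def)

lemma supp_add: "supp (f + g) \<subseteq> supp f \<union> supp g"
  by (auto simp: supp_def)

lemma supp_diff: "supp (f - g) \<subseteq> supp f \<union> supp g"
  by (auto simp: supp_def)

lemma supp_gscale: "supp (gscale c f) \<subseteq> supp f"
  by (auto simp: supp_def gscale_def)

lemma finite_supp_add: "finite (supp f) \<Longrightarrow> finite (supp g) \<Longrightarrow> finite (supp (f + g))"
  using supp_add by (rule finite_subset) auto

lemma finite_supp_diff: "finite (supp f) \<Longrightarrow> finite (supp g) \<Longrightarrow> finite (supp (f - g))"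
  using supp_diff by (rule finite_subset) auto

lemma finite_supp_gscale: "finite (supp f) \<Longrightarrow> finite (supp (gscale c f))"
  using supp_gscale by (rule finite_subset)

lemma finite_supp_sum: "(\<And>i. i \<in> S \<Longrightarrow> finite (supp (F i))) \<Longrightarrow> finite (supp (sum F S))"
  by (induction S rule: infinite_finite_induct) (auto intro: finite_supp_add)

lemma sum_fun_apply: "sum F S w = (\<Sum>i\<in>S. F i w)"
  by (induction S rule: infinite_finite_induct) auto

lemma conv_eq_sum:
  assumes "finite A" "supp f \<subseteq> A" "finite B" "supp g \<subseteq> B"
  shows "conv f g w = (\<Sum>a\<in>A. \<Sum>b\<in>B. if wmult a b = w then f a * g b else 0)"
proof -
  have "conv f g w = (\<Sum>a\<in>supp f. \<Sum>b\<in>B. if wmult a b = w then f a * g b else 0)"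
    unfolding conv_def
    by (intro sum.cong refl sum.mono_neutral_left assms) (auto simp: supp_def)
  also have "\<dots> = (\<Sum>a\<in>A. \<Sum>b\<in>B. if wmult a b = w then f a * g b else 0)"
    by (intro sum.mono_neutral_left assms) (auto simp: supp_def intro!: sum.neutral split: if_splits)
  finally show ?thesis .
qed

lemma supp_conv: "supp (conv f g) \<subseteq> (\<lambda>(a, b). wmult a b) ` (supp f \<times> supp g)"
proof
  fix w assume "w \<in> supp (conv f g)"
  then have "conv f g w \<noteq> 0" by (simp add: supp_def)
  then obtain a where a: "a \<in> supp f"
    and "(\<Sum>b\<in>supp g. if wmult a b = w then f a * g b else 0) \<noteq> 0"
    unfolding conv_def by (rule sum.not_neutral_contains_not_neutral)
  from this(2) obtain b where "b \<in> supp g" "(if wmult a b = w then f a * g b else 0) \<noteq> 0"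
    by (rule sum.not_neutral_contains_not_neutral)
  with a show "w \<in> (\<lambda>(a, b). wmult a b) ` (supp f \<times> supp g)"
    by (force split: if_splits)
qed

lemma finite_supp_conv: "finite (supp (conv f g))"
proof (cases "finite (supp f) \<and> finite (supp g)")
  case True
  then show ?thesis by (intro finite_subset[OF supp_conv] finite_imageI) auto
next
  case False
  then have "conv f g = 0" by (auto simp: conv_def)
  then show ?thesis by simp
qed

lemma conv_delta_delta [simp]: "conv (delta a) (delta b) = delta (wmult a b)"
  unfolding conv_def supp_delta by (rule ext) (simp add: delta_def)

lemma conv_zero_left [simp]: "conv 0 g = 0"
  by (rule ext) (simp add: conv_def)

lemma conv_zero_right [simp]: "conv f 0 = 0"
  by (rule ext) (simp add: conv_def)

lemma conv_add_left:
  assumes "finite (supp f)" "finite (supp h)" "finite (supp g)"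
  shows "conv (f + h) g = conv f g + conv h g"
proof
  fix w
  let ?A = "supp f \<union> supp h"
  have "conv (f + h) g w = (\<Sum>a\<in>?A. \<Sum>b\<in>supp g. if wmult a b = w then (f + h) a * g b else 0)"
    using assms supp_add by (intro conv_eq_sum) auto
  also have "\<dots> = (\<Sum>a\<in>?A. \<Sum>b\<in>supp g. if wmult a b = w then f a * g b else 0)
               + (\<Sum>a\<in>?A. \<Sum>b\<in>supp g. if wmult a b = w then h a * g b else 0)"
    by (simp add: sum.distrib[symmetric] distrib_right if_distrib cong: if_cong)
  also have "\<dots> = conv f g w + conv h g w"
    using assms by (simp add: conv_eq_sum[of ?A])
  finally show "conv (f + h) g w = (conv f g + conv h g) w" by simp
qed

lemma conv_add_right:
  assumes "finite (supp f)" "finite (supp h)" "finite (supp g)"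
  shows "conv g (f + h) = conv g f + conv g h"
proof
  fix w
  let ?A = "supp f \<union> supp h"
  have "conv g (f + h) w = (\<Sum>b\<in>supp g. \<Sum>a\<in>?A. if wmult b a = w then g b * (f + h) a else 0)"
    using assms supp_add by (intro conv_eq_sum) auto
  also have "\<dots> = (\<Sum>b\<in>supp g. \<Sum>a\<in>?A. if wmult b a = w then g b * f a else 0)
               + (\<Sum>b\<in>supp g. \<Sum>a\<in>?A. if wmult b a = w then g b * h a else 0)"
    by (simp add: sum.distrib[symmetric] distrib_left if_distrib cong: if_cong)
  also have "\<dots> = conv g f w + conv g h w"
    using assms by (simp add: conv_eq_sum[of _ _ ?A])
  finally show "conv g (f + h) w = (conv g f + conv g h) w" by simp
qed

lemma conv_diff_left:
  assumes "finite (supp f)" "finite (supp h)" "finite (supp g)"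
  shows "conv (f - h) g = conv f g - conv h g"
  using conv_add_left[OF finite_supp_diff[OF assms(1,2)] assms(2,3)] by simp

lemma conv_diff_right:
  assumes "finite (supp f)" "finite (supp h)" "finite (supp g)"
  shows "conv g (f - h) = conv g f - conv g h"
  using conv_add_right[OF finite_supp_diff[OF assms(1,2)] assms(2,3)] by simp

lemma conv_gscale_left:
  assumes "finite (supp f)" "finite (supp g)"
  shows "conv (gscale c f) g = gscale c (conv f g)"
proof
  fix w
  have "conv (gscale c f) g w
          = (\<Sum>a\<in>supp f. \<Sum>b\<in>supp g. if wmult a b = w then gscale c f a * g b else 0)"
    using assms supp_gscale by (intro conv_eq_sum) auto
  also have "\<dots> = gscale c (conv f g) w"
    using assms by (simp add: conv_eq_sum gscale_def sum_distrib_left mult.assoc if_distrib cong: if_cong)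
  finally show "conv (gscale c f) g w = gscale c (conv f g) w" .
qed

lemma conv_gscale_right:
  assumes "finite (supp f)" "finite (supp g)"
  shows "conv g (gscale c f) = gscale c (conv g f)"
proof
  fix w
  have "conv g (gscale c f) w
          = (\<Sum>b\<in>supp g. \<Sum>a\<in>supp f. if wmult b a = w then g b * gscale c f a else 0)"
    using assms supp_gscale by (intro conv_eq_sum) auto
  also have "\<dots> = gscale c (conv g f) w"
    using assms by (simp add: conv_eq_sum gscale_def sum_distrib_left mult.left_commute if_distrib cong: if_cong)
  finally show "conv g (gscale c f) w = gscale c (conv g f) w" .
qed

lemma conv_sum_left:
  assumes "\<And>i. i \<in> S \<Longrightarrow> finite (supp (F i))" "finite (supp g)"
  shows "conv (sum F S) g = (\<Sum>i\<in>S. conv (F i) g)"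
  using assms
  by (induction S rule: infinite_finite_induct) (simp_all add: conv_add_left finite_supp_sum)

lemma conv_sum_right:
  assumes "\<And>i. i \<in> S \<Longrightarrow> finite (supp (F i))" "finite (supp g)"
  shows "conv g (sum F S) = (\<Sum>i\<in>S. conv g (F i))"
  using assms
  by (induction S rule: infinite_finite_induct) (simp_all add: conv_add_right finite_supp_sum)

lemma conv_unit_left:
  assumes "finite (supp f)" shows "conv (delta []) f = f"
proof
  fix w
  have "conv (delta []) f w = (\<Sum>b\<in>supp f. if b = w then f b else 0)"
    unfolding conv_def supp_delta by (auto simp: delta_def intro!: sum.cong)
  also have "\<dots> = f w" using assms by (simp add: sum.delta' supp_def)
  finally show "conv (delta []) f w = f w" .
qed

lemma conv_unit_right:
  assumes "finite (supp f)" "supp f \<subseteq> Fgrp n" shows "conv f (delta []) = f"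
proof
  fix w
  have "conv f (delta []) w = (\<Sum>b\<in>supp f. if wmult b [] = w then f b else 0)"
    unfolding conv_def supp_delta by (auto simp: delta_def intro!: sum.cong)
  also have "\<dots> = (\<Sum>b\<in>supp f. if b = w then f b else 0)"
  proof (rule sum.cong[OF refl])
    fix b assume "b \<in> supp f"
    with assms(2) have "wmult b [] = b" by (auto simp: Fgrp_def intro: wmult_Nil_right)
    then show "(if wmult b [] = w then f b else 0) = (if b = w then f b else 0)" by simp
  qed
  also have "\<dots> = f w" using assms by (simp add: sum.delta' supp_def)
  finally show "conv f (delta []) w = f w" .
qed

lemma sum_swap_pairs:
  "(\<Sum>c\<in>C. \<Sum>d\<in>D. \<Sum>a\<in>A. \<Sum>b\<in>B. P a b c d) = (\<Sum>a\<in>A. \<Sum>b\<in>B. \<Sum>d\<in>D. \<Sum>c\<in>C. P a b c d)"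
proof -
  have "(\<Sum>c\<in>C. \<Sum>d\<in>D. \<Sum>a\<in>A. \<Sum>b\<in>B. P a b c d) = (\<Sum>d\<in>D. \<Sum>c\<in>C. \<Sum>a\<in>A. \<Sum>b\<in>B. P a b c d)"
    by (rule sum.swap)
  also have "\<dots> = (\<Sum>d\<in>D. \<Sum>a\<in>A. \<Sum>c\<in>C. \<Sum>b\<in>B. P a b c d)"
    by (intro sum.cong refl sum.swap)
  also have "\<dots> = (\<Sum>d\<in>D. \<Sum>a\<in>A. \<Sum>b\<in>B. \<Sum>c\<in>C. P a b c d)"
    by (intro sum.cong refl sum.swap)
  also have "\<dots> = (\<Sum>a\<in>A. \<Sum>d\<in>D. \<Sum>b\<in>B. \<Sum>c\<in>C. P a b c d)"
    by (rule sum.swap)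
  also have "\<dots> = (\<Sum>a\<in>A. \<Sum>b\<in>B. \<Sum>d\<in>D. \<Sum>c\<in>C. P a b c d)"
    by (intro sum.cong refl sum.swap)
  finally show ?thesis .
qed

lemma sum_if_eq_conj:
  assumes "finite C" "k \<in> C"
  shows "(\<Sum>c\<in>C. if k = c \<and> Q c then X c else 0) = (if Q k then X k else (0::'a::comm_monoid_add))"
proof -
  have "(\<Sum>c\<in>C. if k = c \<and> Q c then X c else 0) = (\<Sum>c\<in>C. if k = c then (if Q c then X c else 0) else 0)"
    by (intro sum.cong) auto
  then show ?thesis using assms by simp
qed

lemma conv_conv_left_eq:
  assumes "finite (supp f)" "finite (supp g)" "finite (supp h)"
  shows "conv (conv f g) h w = (\<Sum>a\<in>supp f. \<Sum>b\<in>supp g. \<Sum>d\<in>supp h.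
           if wmult (wmult a b) d = w then f a * g b * h d else 0)"
proof -
  let ?C = "(\<lambda>(a, b). wmult a b) ` (supp f \<times> supp g)"
  have C: "finite ?C" using assms by auto
  have "conv (conv f g) h w
          = (\<Sum>c\<in>?C. \<Sum>d\<in>supp h. if wmult c d = w then conv f g c * h d else 0)"
    using assms C supp_conv by (intro conv_eq_sum) auto
  also have "\<dots> = (\<Sum>c\<in>?C. \<Sum>d\<in>supp h. \<Sum>a\<in>supp f. \<Sum>b\<in>supp g.
                     if wmult a b = c \<and> wmult c d = w then f a * g b * h d else 0)"
    using assms by (auto simp: conv_eq_sum sum_distrib_right intro!: sum.cong)
  also have "\<dots> = (\<Sum>a\<in>supp f. \<Sum>b\<in>supp g. \<Sum>d\<in>supp h. \<Sum>c\<in>?C.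
                     if wmult a b = c \<and> wmult c d = w then f a * g b * h d else 0)"
    by (rule sum_swap_pairs)
  also have "\<dots> = (\<Sum>a\<in>supp f. \<Sum>b\<in>supp g. \<Sum>d\<in>supp h.
                     if wmult (wmult a b) d = w then f a * g b * h d else 0)"
  proof (intro sum.cong refl)
    fix a b assume "a \<in> supp f" "b \<in> supp g"
    then have "wmult a b \<in> ?C" by force
    with C show "(\<Sum>c\<in>?C. if wmult a b = c \<and> wmult c d = w then f a * g b * h d else 0)
        = (if wmult (wmult a b) d = w then f a * g b * h d else 0)" for d
      by (rule sum_if_eq_conj)
  qed
  finally show ?thesis .
qed

lemma conv_conv_right_eq:
  assumes "finite (supp f)" "finite (supp g)" "finite (supp h)"
  shows "conv f (conv g h) w = (\<Sum>a\<in>supp f. \<Sum>b\<in>supp g. \<Sum>d\<in>supp h.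
           if wmult a (wmult b d) = w then f a * g b * h d else 0)"
proof -
  let ?C = "(\<lambda>(b, d). wmult b d) ` (supp g \<times> supp h)"
  have C: "finite ?C" using assms by auto
  have "conv f (conv g h) w
          = (\<Sum>a\<in>supp f. \<Sum>e\<in>?C. if wmult a e = w then f a * conv g h e else 0)"
    using assms C supp_conv by (intro conv_eq_sum) auto
  also have "\<dots> = (\<Sum>a\<in>supp f. \<Sum>e\<in>?C. \<Sum>b\<in>supp g. \<Sum>d\<in>supp h.
                     if wmult b d = e \<and> wmult a e = w then f a * g b * h d else 0)"
    using assms by (auto simp: conv_eq_sum sum_distrib_left mult.assoc intro!: sum.cong)
  also have "\<dots> = (\<Sum>a\<in>supp f. \<Sum>b\<in>supp g. \<Sum>e\<in>?C. \<Sum>d\<in>supp h.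
                     if wmult b d = e \<and> wmult a e = w then f a * g b * h d else 0)"
    by (rule sum.cong[OF refl], rule sum.swap)
  also have "\<dots> = (\<Sum>a\<in>supp f. \<Sum>b\<in>supp g. \<Sum>d\<in>supp h. \<Sum>e\<in>?C.
                     if wmult b d = e \<and> wmult a e = w then f a * g b * h d else 0)"
    by (rule sum.cong[OF refl], rule sum.cong[OF refl], rule sum.swap)
  also have "\<dots> = (\<Sum>a\<in>supp f. \<Sum>b\<in>supp g. \<Sum>d\<in>supp h.
                     if wmult a (wmult b d) = w then f a * g b * h d else 0)"
    using C by (intro sum.cong refl sum_if_eq_conj) auto
  finally show ?thesis .
qed

lemma conv_assoc:
  assumes "finite (supp f)" "finite (supp g)" "finite (supp h)"
    and "supp f \<subseteq> Fgrp n" "supp g \<subseteq> Fgrp n" "supp h \<subseteq> Fgrp n"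
  shows "conv (conv f g) h = conv f (conv g h)"
proof
  fix w
  have "wmult (wmult a b) d = wmult a (wmult b d)"
    if "a \<in> supp f" "b \<in> supp g" "d \<in> supp h" for a b d
    using that assms(4-6) by (intro wmult_assoc) (auto simp: Fgrp_def)
  then show "conv (conv f g) h w = conv f (conv g h) w"
    using assms(1-3) by (simp add: conv_conv_left_eq conv_conv_right_eq cong: sum.cong)
qed

lemma GA_iff: "f \<in> GA n \<longleftrightarrow> finite (supp f) \<and> supp f \<subseteq> Fgrp n"
  by (simp add: GA_def)

lemma GA_finite_supp: "f \<in> GA n \<Longrightarrow> finite (supp f)"
  by (simp add: GA_iff)

lemma GA_delta: "reduced n a \<Longrightarrow> delta a \<in> GA n"
  by (simp add: GA_iff Fgrp_def)

lemma GA_add: "f \<in> GA n \<Longrightarrow> g \<in> GA n \<Longrightarrow> f + g \<in> GA n"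
  unfolding GA_iff using supp_add[of f g] by (auto intro: finite_subset)

lemma GA_diff: "f \<in> GA n \<Longrightarrow> g \<in> GA n \<Longrightarrow> f - g \<in> GA n"
  unfolding GA_iff using supp_diff[of f g] by (auto intro: finite_subset)

lemma GA_gscale: "f \<in> GA n \<Longrightarrow> gscale c f \<in> GA n"
  unfolding GA_iff using supp_gscale[of c f] by (auto intro: finite_subset)

lemma GA_conv: "f \<in> GA n \<Longrightarrow> g \<in> GA n \<Longrightarrow> conv f g \<in> GA n"
  using supp_conv[of f g] finite_supp_conv[of f g]
  by (fastforce simp: GA_iff Fgrp_def intro: reduced_wmult)

lemma GA_ugen: "v < n \<Longrightarrow> ugen v \<in> GA n"
  by (simp add: ugen_def GA_delta letter_ok_def)

lemma conv_assoc_GA: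
  "f \<in> GA n \<Longrightarrow> g \<in> GA n \<Longrightarrow> h \<in> GA n \<Longrightarrow> conv (conv f g) h = conv f (conv g h)"
  by (rule conv_assoc) (auto simp: GA_iff)

lemma sum_gscale_delta: "finite (supp f) \<Longrightarrow> (\<Sum>a\<in>supp f. gscale (f a) (delta a)) = f"
proof
  fix w assume "finite (supp f)"
  then show "(\<Sum>a\<in>supp f. gscale (f a) (delta a)) w = f w"
    by (simp add: sum_fun_apply gscale_def delta_def sum.delta supp_def if_distrib cong: if_cong)
qed

lemma zero_in_Ideal: "0 \<in> Ideal n E"
  using Ideal.zero by (simp add: zero_fun_def)

lemma add_in_Ideal: "x \<in> Ideal n E \<Longrightarrow> y \<in> Ideal n E \<Longrightarrow> x + y \<in> Ideal n E"
  using Ideal.add by (simp add: gadd_def plus_fun_def)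

lemma sum_in_Ideal: "(\<And>i. i \<in> S \<Longrightarrow> F i \<in> Ideal n E) \<Longrightarrow> sum F S \<in> Ideal n E"
  by (induction S rule: infinite_finite_induct) (auto intro: add_in_Ideal zero_in_Ideal)

lemma gscale_in_Ideal:
  assumes "x \<in> Ideal n E" "x \<in> GA n" shows "gscale c x \<in> Ideal n E"
proof -
  have unit: "delta [] \<in> GA n" by (simp add: GA_delta)
  have "conv (gscale c (delta [])) x \<in> Ideal n E"
    using assms(1) GA_gscale[OF unit] by (rule Ideal.lmult)
  then show ?thesis
    using assms(2) by (simp add: conv_gscale_left GA_finite_supp conv_unit_left)
qed

lemma diff_in_Ideal:
  assumes "x \<in> Ideal n E" "y \<in> Ideal n E" "y \<in> GA n" shows "x - y \<in> Ideal n E"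
proof -
  have "x + gscale (-1) y \<in> Ideal n E" using assms by (intro add_in_Ideal gscale_in_Ideal)
  moreover have "x + gscale (-1) y = x - y" by (rule ext) (simp add: gscale_def)
  ultimately show ?thesis by simp
qed

section \<open>The idempotents \<open>e\<^sub>v\<^sub>,\<^sub>a\<close>\<close>

lemma omega_cube: "omega ^ 3 = 1"
proof -
  have "omega ^ 3 = exp (of_nat 3 * (2 * of_real pi * \<i> / 3))"
    unfolding omega_def by (rule exp_of_nat_mult[symmetric])
  also have "of_nat 3 * (2 * of_real pi * \<i> / 3) = 2 * of_real pi * \<i>" by simp
  finally show ?thesis by simp
qed

lemma omega_ne_1: "omega \<noteq> 1"
proof
  assume "omega = 1"
  moreover have "Im omega = sin (2 * pi / 3)"
    unfolding omega_def Im_exp by simp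
  moreover have "sin (2 * pi / 3) > 0" by (rule sin_gt_zero) auto
  ultimately show False by simp
qed

lemma omega_power_mod: "omega ^ k = omega ^ (k mod 3)"
  by (metis div_mult_mod_eq mult.commute omega_cube power_add power_mult power_one mult_1)

lemma omega_power_eq_1_iff: "omega ^ k = 1 \<longleftrightarrow> 3 dvd k"
proof
  assume k: "omega ^ k = 1"
  have "omega ^ 2 \<noteq> 1"
  proof
    assume "omega ^ 2 = 1"
    then have "omega ^ 3 = omega" by (simp add: power3_eq_cube power2_eq_square)
    with omega_cube omega_ne_1 show False by simp
  qed
  moreover have "k mod 3 = 0 \<or> k mod 3 = 1 \<or> k mod 3 = 2" by arith
  ultimately show "3 dvd k"
    using k omega_ne_1 omega_power_mod[of k] by auto
qed (auto simp: omega_power_mod)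

lemma sum_omega_powers: "(\<Sum>a<3. omega ^ (a * k)) = (if 3 dvd k then 3 else 0)"
proof (cases "3 dvd k")
  case True
  then have "omega ^ (a * k) = 1" for a by (simp add: omega_power_eq_1_iff)
  with True show ?thesis by simp
next
  case False
  then have "omega ^ k \<noteq> 1" by (simp add: omega_power_eq_1_iff)
  then have "(\<Sum>a<3. (omega ^ k) ^ a) = ((omega ^ k) ^ 3 - 1) / (omega ^ k - 1)"
    by (rule geometric_sum)
  also have "(omega ^ k) ^ 3 = 1" by (simp add: power_mult[symmetric] omega_power_eq_1_iff)
  finally show ?thesis using False by (simp add: power_mult[symmetric] mult.commute)
qed

lemma inverse_omega: "inverse omega = omega ^ 2"
  using omega_cube by (intro inverse_unique) (simp add: power3_eq_cube power2_eq_square mult.assoc)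

lemma lessThan_3: "{..<3::nat} = {0, 1, 2}"
  by auto

lemma upow_eq: "k < 3 \<Longrightarrow> upow v k = delta (if k = 0 then [] else [(v, k)])"
proof -
  assume "k < 3"
  then consider "k = 0" | "k = 1" | "k = 2" by linarith
  then show ?thesis
    by cases (simp_all add: ugen_def numeral_2_eq_2)
qed

lemma eproj_apply:
  "eproj v a w = (\<Sum>k<3. omega ^ (k * (2 * a)) * delta (if k = 0 then [] else [(v, k)]) w) / 3"
proof -
  have "(\<Sum>k<3. inverse omega ^ (a * k) * upow v k w)
          = (\<Sum>k<3. omega ^ (k * (2 * a)) * delta (if k = 0 then [] else [(v, k)]) w)"
  proof (rule sum.cong[OF refl])
    fix k :: nat assume "k \<in> {..<3}"
    moreover have "inverse omega ^ (a * k) = omega ^ (k * (2 * a))"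
      unfolding inverse_omega power_mult[symmetric] by (simp add: mult_ac)
    ultimately show "inverse omega ^ (a * k) * upow v k w
          = omega ^ (k * (2 * a)) * delta (if k = 0 then [] else [(v, k)]) w"
      by (simp add: upow_eq)
  qed
  then show ?thesis by (simp add: eproj_def)
qed

lemma supp_eproj: "supp (eproj v a) \<subseteq> {[], [(v, 1)], [(v, 2)]}"
  by (auto simp: supp_def eproj_apply delta_def lessThan_3)

lemma finite_supp_eproj: "finite (supp (eproj v a))"
  using supp_eproj by (rule finite_subset) simp

lemma GA_eproj: "v < n \<Longrightarrow> eproj v a \<in> GA n"
  using supp_eproj finite_supp_eproj by (fastforce simp: GA_iff Fgrp_def letter_ok_def)

text \<open>The e_{v,a} are the discrete Fourier transform of the powers of u_v, which the
orthogonality relation sum_omega_powers inverts.\<close>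

lemma sum_omega_eproj:
  "(\<Sum>a<3. omega ^ (a * m) * eproj v a w)
     = (\<Sum>k<3. (\<Sum>a<3. omega ^ (a * (2 * k + m))) * delta (if k = 0 then [] else [(v, k)]) w) / 3"
proof -
  let ?d = "\<lambda>k. delta (if k = 0 then [] else [(v, k)]) w"
  have "omega ^ (a * m) * eproj v a w = (\<Sum>k<3. omega ^ (a * (2 * k + m)) * ?d k) / 3" for a
    by (simp add: eproj_apply sum_distrib_left power_add distrib_left mult_ac)
  then have "(\<Sum>a<3. omega ^ (a * m) * eproj v a w) = (\<Sum>a<3. \<Sum>k<3. omega ^ (a * (2 * k + m)) * ?d k) / 3"
    by (simp add: sum_divide_distrib)
  also have "\<dots> = (\<Sum>k<3. \<Sum>a<3. omega ^ (a * (2 * k + m)) * ?d k) / 3"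
    by (subst sum.swap) (rule refl)
  also have "\<dots> = (\<Sum>k<3. (\<Sum>a<3. omega ^ (a * (2 * k + m))) * ?d k) / 3"
    by (simp add: sum_distrib_right)
  finally show ?thesis .
qed

lemma sum_eproj: "(\<Sum>a<3. eproj v a) = delta []"
proof
  fix w
  have "(\<Sum>a<3. eproj v a) w = (\<Sum>k<3. (if 3 dvd (2 * k) then 3 else 0) * delta (if k = 0 then [] else [(v, k)]) w) / 3"
    using sum_omega_eproj[of 0 v w] by (simp add: sum_fun_apply sum_omega_powers)
  then show "(\<Sum>a<3. eproj v a) w = delta [] w"
    by (simp add: lessThan_3)
qed

lemma ugen_eq_sum_eproj: "ugen v = (\<Sum>a<3. gscale (omega ^ a) (eproj v a))"
proof
  fix w
  have "(\<Sum>a<3. gscale (omega ^ a) (eproj v a)) w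
          = (\<Sum>k<3. (if 3 dvd (2 * k + 1) then 3 else 0) * delta (if k = 0 then [] else [(v, k)]) w) / 3"
    using sum_omega_eproj[of 1 v w] unfolding sum_omega_powers by (simp add: sum_fun_apply gscale_def)
  then show "ugen v w = (\<Sum>a<3. gscale (omega ^ a) (eproj v a)) w"
    by (simp add: lessThan_3 ugen_def)
qed

definition comm :: "(word \<Rightarrow> complex) \<Rightarrow> (word \<Rightarrow> complex) \<Rightarrow> (word \<Rightarrow> complex)" where
  "comm x y = conv x y - conv y x"

lemma gsub_conv_eq_comm: "gsub (conv x y) (conv y x) = comm x y"
  by (simp add: gsub_def comm_def fun_diff_def)

lemma comm_self [simp]: "comm x x = 0"
  by (simp add: comm_def)

lemma GA_comm: "x \<in> GA n \<Longrightarrow> y \<in> GA n \<Longrightarrow> comm x y \<in> GA n"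
  unfolding comm_def by (intro GA_diff GA_conv)

lemma comm_swap_in_Ideal:
  assumes "comm x y \<in> Ideal n E" "x \<in> GA n" "y \<in> GA n"
  shows "comm y x \<in> Ideal n E"
proof -
  have "gscale (-1) (comm x y) \<in> Ideal n E"
    using assms by (intro gscale_in_Ideal GA_comm)
  moreover have "gscale (-1) (comm x y) = comm y x"
    by (rule ext) (simp add: gscale_def comm_def)
  ultimately show ?thesis by simp
qed

lemma comm_conv_left_eq:
  assumes "x \<in> GA n" "y \<in> GA n" "z \<in> GA n"
  shows "comm (conv x y) z = conv x (comm y z) + conv (comm x z) y"
  unfolding comm_def using assms
  by (simp add: conv_diff_right conv_diff_left GA_finite_supp finite_supp_conv conv_assoc_GA GA_conv)

lemma comm_conv_left_in_Ideal:
  assumes "x \<in> GA n" "y \<in> GA n" "z \<in> GA n"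
    and "comm x z \<in> Ideal n E" "comm y z \<in> Ideal n E"
  shows "comm (conv x y) z \<in> Ideal n E"
  unfolding comm_conv_left_eq[OF assms(1-3)]
  using assms by (intro add_in_Ideal Ideal.lmult Ideal.rmult)

lemma gscale_diff: "gscale c x - gscale c y = gscale c (x - y)"
  by (rule ext) (simp add: gscale_def right_diff_distrib)

lemma comm_sum_gscale_left_in_Ideal:
  assumes "finite S" "\<And>i. i \<in> S \<Longrightarrow> x i \<in> GA n" "z \<in> GA n"
    and "\<And>i. i \<in> S \<Longrightarrow> comm (x i) z \<in> Ideal n E"
  shows "comm (\<Sum>i\<in>S. gscale (c i) (x i)) z \<in> Ideal n E"
proof -
  have fin: "finite (supp (gscale (c i) (x i)))" "finite (supp (x i))" if "i \<in> S" for i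
    using that assms(2) by (auto intro: finite_supp_gscale GA_finite_supp)
  have fz: "finite (supp z)" using assms(3) by (rule GA_finite_supp)
  have "conv (\<Sum>i\<in>S. gscale (c i) (x i)) z = (\<Sum>i\<in>S. gscale (c i) (conv (x i) z))"
    using fin fz by (simp add: conv_sum_left conv_gscale_left cong: sum.cong)
  moreover have "conv z (\<Sum>i\<in>S. gscale (c i) (x i)) = (\<Sum>i\<in>S. gscale (c i) (conv z (x i)))"
    using fin fz by (simp add: conv_sum_right conv_gscale_right cong: sum.cong)
  ultimately have "comm (\<Sum>i\<in>S. gscale (c i) (x i)) z = (\<Sum>i\<in>S. gscale (c i) (comm (x i) z))"
    by (simp add: comm_def sum_subtractf[symmetric] gscale_diff)
  also have "\<dots> \<in> Ideal n E"
    using assms by (intro sum_in_Ideal gscale_in_Ideal GA_comm) auto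
  finally show ?thesis .
qed

section \<open>Adjacent vertices\<close>

context
  fixes n :: nat and E :: "nat \<Rightarrow> nat \<Rightarrow> bool" and v w :: nat
  assumes vertices: "v < n" "w < n" and edge: "E v w" "E w v"
begin

lemma GA_eproj_edge: "eproj v a \<in> GA n" "eproj w a \<in> GA n"
  using vertices by (auto intro: GA_eproj)

lemma eproj_triple_in_Ideal:
  assumes "i < 3" "j < 3" "l < 3" "i \<noteq> l"
  shows "conv (conv (eproj v i) (eproj w j)) (eproj v l) \<in> Ideal n E"
proof -
  let ?T = "\<lambda>b. conv (conv (eproj v i) (eproj w b)) (eproj v l)"
  have Ti: "?T i \<in> Ideal n E"
    using assms vertices edge by (intro Ideal.rmult[OF _ GA_eproj_edge(1)] Ideal.gen2) auto
  have "conv (eproj v i) (conv (eproj w l) (eproj v l)) \<in> Ideal n E"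
    using assms vertices edge by (intro Ideal.lmult[OF _ GA_eproj_edge(1)] Ideal.gen2) auto
  then have Tl: "?T l \<in> Ideal n E"
    by (subst conv_assoc_GA) (auto intro: GA_eproj_edge)
  show ?thesis
  proof (cases "j = i \<or> j = l")
    case True
    with Ti Tl show ?thesis by auto
  next
    case False
    have S: "{..<3} = insert j {i, l}" using assms False by auto
    have "(\<Sum>b<3. ?T b) = conv (conv (eproj v i) (\<Sum>b<3. eproj w b)) (eproj v l)"
      by (simp add: conv_sum_left conv_sum_right finite_supp_eproj finite_supp_conv)
    also have "\<dots> = conv (eproj v i) (eproj v l)"
      using GA_eproj_edge(1) by (simp add: sum_eproj conv_unit_right[of _ n] GA_iff)
    also have "\<dots> \<in> Ideal n E"
      using assms vertices by (intro Ideal.gen1) auto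
    finally have "(\<Sum>b\<in>insert j {i, l}. ?T b) \<in> Ideal n E"
      by (simp only: S)
    then have "?T j + (?T i + ?T l) \<in> Ideal n E"
      using False assms(4) by simp
    from diff_in_Ideal[OF this add_in_Ideal[OF Ti Tl]]
    show ?thesis by (simp add: GA_add GA_conv GA_eproj_edge)
  qed
qed

lemma comm_eproj_in_Ideal:
  assumes "i < 3" "j < 3"
  shows "comm (eproj v i) (eproj w j) \<in> Ideal n E"
proof -
  let ?X = "conv (eproj v i) (eproj w j)" and ?Y = "conv (eproj w j) (eproj v i)"
  let ?L = "{..<3} - {i}"
  have G: "?X \<in> GA n" "?Y \<in> GA n" by (auto intro: GA_conv GA_eproj_edge)
  have "?X = conv ?X (\<Sum>l<3. eproj v l)"
    using G by (simp add: sum_eproj conv_unit_right[of _ n] GA_iff)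
  also have "\<dots> = (\<Sum>l<3. conv ?X (eproj v l))"
    using G by (simp add: conv_sum_right finite_supp_eproj GA_finite_supp)
  also have "\<dots> = conv ?X (eproj v i) + (\<Sum>l\<in>?L. conv ?X (eproj v l))"
    using assms by (intro sum.remove) auto
  finally have X: "?X - conv ?X (eproj v i) = (\<Sum>l\<in>?L. conv ?X (eproj v l))"
    by (metis add_diff_cancel_left')
  have "?Y = conv (\<Sum>l<3. eproj v l) ?Y"
    using G by (simp add: sum_eproj conv_unit_left GA_iff)
  also have "\<dots> = (\<Sum>l<3. conv (eproj v l) ?Y)"
    using G by (simp add: conv_sum_left finite_supp_eproj GA_finite_supp)
  also have "\<dots> = conv (eproj v i) ?Y + (\<Sum>l\<in>?L. conv (eproj v l) ?Y)"
    using assms by (intro sum.remove) auto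
  finally have Y: "?Y - conv (eproj v i) ?Y = (\<Sum>l\<in>?L. conv (eproj v l) ?Y)"
    by (metis add_diff_cancel_left')
  have Y_terms: "conv (eproj v l) ?Y \<in> Ideal n E" if "l \<in> ?L" for l
  proof -
    have "conv (conv (eproj v l) (eproj w j)) (eproj v i) \<in> Ideal n E"
      using that assms by (intro eproj_triple_in_Ideal) auto
    then show ?thesis by (simp only: conv_assoc_GA[OF GA_eproj_edge(1,2,1)])
  qed
  have "?X - conv ?X (eproj v i) \<in> Ideal n E"
    unfolding X using assms by (intro sum_in_Ideal eproj_triple_in_Ideal) auto
  moreover have "?Y - conv (eproj v i) ?Y \<in> Ideal n E"
    unfolding Y using Y_terms by (rule sum_in_Ideal)
  ultimately have "(?X - conv ?X (eproj v i)) - (?Y - conv (eproj v i) ?Y) \<in> Ideal n E"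
    by (rule diff_in_Ideal) (auto intro: GA_diff GA_conv GA_eproj_edge)
  moreover have "conv ?X (eproj v i) = conv (eproj v i) ?Y"
    by (rule conv_assoc_GA) (auto intro: GA_eproj_edge)
  ultimately show ?thesis
    unfolding comm_def by simp
qed

lemma comm_ugen_in_Ideal: "comm (ugen v) (ugen w) \<in> Ideal n E"
proof -
  have ugen_eproj: "comm (ugen w) (eproj v a) \<in> Ideal n E" if "a < 3" for a
    unfolding ugen_eq_sum_eproj[of w]
  proof (rule comm_sum_gscale_left_in_Ideal)
    show "comm (eproj w b) (eproj v a) \<in> Ideal n E" if "b \<in> {..<3}" for b
      using comm_swap_in_Ideal[OF comm_eproj_in_Ideal GA_eproj_edge] that \<open>a < 3\<close> by simp
  qed (auto intro: GA_eproj_edge)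
  have "comm (eproj v a) (ugen w) \<in> Ideal n E" if "a < 3" for a
    using comm_swap_in_Ideal[OF ugen_eproj[OF that] GA_ugen[OF vertices(2)] GA_eproj_edge(1)] .
  then show ?thesis
    unfolding ugen_eq_sum_eproj[of v] using vertices
    by (intro comm_sum_gscale_left_in_Ideal GA_ugen GA_eproj_edge) auto
qed

end

section \<open>Complete graphs\<close>

lemma delta_Cons:
  assumes "reduced n (x # a)" shows "delta (x # a) = conv (delta [x]) (delta a)"
proof -
  have "cons_letter x a = x # a"
    using assms by (intro cons_letter_fresh) (auto simp: reduced_Cons)
  then show ?thesis by simp
qed

lemma delta_letter:
  assumes "letter_ok n x"
  obtains v where "v < n" "delta [x] = ugen v \<or> delta [x] = conv (ugen v) (ugen v)"
  using assms by (cases x) (auto simp: letter_ok_def ugen_def numeral_2_eq_2)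

lemma comm_in_Ideal_if_comm_ugen:
  assumes z: "z \<in> GA n" and ugen_z: "\<And>v. v < n \<Longrightarrow> comm (ugen v) z \<in> Ideal n E"
    and x: "x \<in> GA n"
  shows "comm x z \<in> Ideal n E"
proof -
  have letter: "comm (delta [y]) z \<in> Ideal n E" if y: "letter_ok n y" for y
  proof -
    obtain v where v: "v < n" "delta [y] = ugen v \<or> delta [y] = conv (ugen v) (ugen v)"
      using y by (rule delta_letter)
    have "comm (conv (ugen v) (ugen v)) z \<in> Ideal n E"
      using GA_ugen[OF v(1)] GA_ugen[OF v(1)] z ugen_z[OF v(1)] ugen_z[OF v(1)]
      by (rule comm_conv_left_in_Ideal)
    with v ugen_z show ?thesis by auto
  qed
  have word: "comm (delta a) z \<in> Ideal n E" if "reduced n a" for a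
    using that
  proof (induction a)
    case Nil
    have "comm (delta []) z = 0"
      using z by (simp add: comm_def conv_unit_left conv_unit_right[of _ n] GA_iff)
    then show ?case
      using zero_in_Ideal by metis
  next
    case (Cons y a)
    then have "letter_ok n y" "reduced n a" by (simp_all add: reduced_Cons)
    then show ?case
      unfolding delta_Cons[OF Cons.prems]
      by (intro comm_conv_left_in_Ideal letter Cons.IH GA_delta z) (simp_all add: letter_ok_def)
  qed
  have "comm (\<Sum>a\<in>supp x. gscale (x a) (delta a)) z \<in> Ideal n E"
    using x z by (intro comm_sum_gscale_left_in_Ideal GA_delta word) (auto simp: GA_iff Fgrp_def)
  then show ?thesis
    by (simp only: sum_gscale_delta[OF GA_finite_supp[OF x]])
qed

lemma comm_in_Ideal_if_ugen_commute:
  assumes generators: "\<And>u v. u < n \<Longrightarrow> v < n \<Longrightarrow> comm (ugen u) (ugen v) \<in> Ideal n E"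
    and x: "x \<in> GA n" and y: "y \<in> GA n"
  shows "comm x y \<in> Ideal n E"
proof (rule comm_in_Ideal_if_comm_ugen[OF y _ x])
  fix v assume v: "v < n"
  have "comm y (ugen v) \<in> Ideal n E"
    using GA_ugen[OF v] generators[OF _ v] y by (rule comm_in_Ideal_if_comm_ugen)
  then show "comm (ugen v) y \<in> Ideal n E"
    using y GA_ugen[OF v] by (rule comm_swap_in_Ideal)
qed

lemma comm_ugen_in_Ideal_if_complete:
  assumes "complete_on n E" "u < n" "v < n"
  shows "comm (ugen u) (ugen v) \<in> Ideal n E"
proof (cases "u = v")
  case True
  then show ?thesis using zero_in_Ideal by simp
next
  case False
  with assms show ?thesis
    by (intro comm_ugen_in_Ideal) (auto simp: complete_on_def)
qed

theorem mainTheorem17: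
  fixes n :: nat and E :: "nat \<Rightarrow> nat \<Rightarrow> bool"
  assumes "graph_on n E"
  shows "(\<forall>v w i j. E v w \<and> i < 3 \<and> j < 3 \<longrightarrow>
            gsub (conv (eproj v i) (eproj w j)) (conv (eproj w j) (eproj v i)) \<in> Ideal n E)
       \<and> (complete_on n E \<longrightarrow>
            (\<forall>x\<in>GA n. \<forall>y\<in>GA n. gsub (conv x y) (conv y x) \<in> Ideal n E))"
  unfolding gsub_conv_eq_comm
proof (intro conjI allI impI ballI)
  fix v w i j :: nat assume "E v w \<and> i < 3 \<and> j < 3"
  with assms show "comm (eproj v i) (eproj w j) \<in> Ideal n E"
    by (intro comm_eproj_in_Ideal) (auto simp: graph_on_def)
next
  fix x y assume complete: "complete_on n E" and x: "x \<in> GA n" and y: "y \<in> GA n"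
  from comm_ugen_in_Ideal_if_complete[OF complete] x y show "comm x y \<in> Ideal n E"
    by (rule comm_in_Ideal_if_ugen_commute)
qed

end
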